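(* Let $\tau$ be an infinitesimal bending of an isometric immersion $f\colon M^n\to\mathbb{R}^{n+p}$. Then at every point of $M^n$ the bilinear form $\theta\colon TM\times TM\to N_fM\oplus N_fM$ defined by $$\theta(X,Y)=(\alpha(X,Y)+\beta(X,Y),\ \alpha(X,Y)-\beta(X,Y))$$ is flat with respect to the indefinite inner product $\langle\!\langle(\xi_1,\eta_1),(\xi_2,\eta_2)\rangle\!\rangle=\langle\xi_1,\xi_2\rangle-\langle\eta_1,\eta_2\rangle$ on $N_fM\oplus N_fM$.
   Context: $\alpha$ is the second fundamental form of $f$ and $N_fM$ its normal bundle. An infinitesimal bending of $f$ is a smooth map $\tau\colon M^n\to\mathbb{R}^{n+p}$ with $\langle f_*X,\tilde\nabla_X\tau\rangle=0$ for all tangent $X$, $\tilde\nabla$ the Euclidean connection. Set $LX=\tilde\nabla_X\tau$ and $B(X,Y)=\tilde\nabla_X(LY)-L\nabla_XY$; $\beta(X,Y)$ is the component of $B(X,Y)$ normal to $f$. A bilinear form $\mathcal{B}\colon V\times U\to W$ into a space with an (possibly indefinite) inner product is flat if $\langle\mathcal{B}(X,Z),\mathcal{B}(Y,W)\rangle-\langle\mathcal{B}(X,W),\mathcal{B}(Y,Z)\rangle=0$ for all $X,Y\in V$, $Z,W\in U$. *)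

theory Defs
  imports "HOL-Analysis.Analysis"
begin

text \<open>Local (chart) setting: the manifold M is an open set U of a Euclidean
  space 'a (dimension n = DIM('a)), the immersion is f :: 'a => 'b with
  'b of dimension n+p, and M carries the metric induced by f.\<close>

fun dder :: "'a::real_normed_vector list \<Rightarrow> ('a \<Rightarrow> 'b::real_normed_vector) \<Rightarrow> 'a \<Rightarrow> 'b" where
  "dder [] g = g"
| "dder (v # vs) g = (\<lambda>x. frechet_derivative (dder vs g) (at x) v)"

definition smooth_on :: "'a::real_normed_vector set \<Rightarrow> ('a \<Rightarrow> 'b::real_normed_vector) \<Rightarrow> bool" where
  "smooth_on U g \<longleftrightarrow> open U \<and> (\<forall>vs. dder vs g differentiable_on U)"

definition push :: "('a::real_normed_vector \<Rightarrow> 'b::real_normed_vector) \<Rightarrow> 'a \<Rightarrow> 'a \<Rightarrow> 'b" where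
  "push g x v = frechet_derivative g (at x) v"

definition d2 :: "('a::real_normed_vector \<Rightarrow> 'b::real_normed_vector) \<Rightarrow> 'a \<Rightarrow> 'a \<Rightarrow> 'a \<Rightarrow> 'b" where
  "d2 g x v w = frechet_derivative (\<lambda>y. frechet_derivative g (at y) w) (at x) v"

definition immersion_on :: "'a::euclidean_space set \<Rightarrow> ('a \<Rightarrow> 'b::euclidean_space) \<Rightarrow> bool" where
  "immersion_on U f \<longleftrightarrow> smooth_on U f \<and> (\<forall>x\<in>U. inj (push f x))"

definition nproj :: "('a::euclidean_space \<Rightarrow> 'b::euclidean_space) \<Rightarrow> 'a \<Rightarrow> 'b \<Rightarrow> 'b" where
  "nproj f x u = (THE n. (\<forall>t\<in>range (push f x). n \<bullet> t = 0) \<and> u - n \<in> range (push f x))"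

definition sff :: "('a::euclidean_space \<Rightarrow> 'b::euclidean_space) \<Rightarrow> 'a \<Rightarrow> 'a \<Rightarrow> 'a \<Rightarrow> 'b" where
  "sff f x v w = nproj f x (d2 f x v w)"

text \<open>Induced (Levi-Civita) connection, via the Gauss formula
  D_X f_* Y = f_* (nabla_X Y) + alpha(X,Y), applied to the coordinate-constant
  extension of w.\<close>
definition conn :: "('a::euclidean_space \<Rightarrow> 'b::euclidean_space) \<Rightarrow> 'a \<Rightarrow> 'a \<Rightarrow> 'a \<Rightarrow> 'a" where
  "conn f x v w = (THE u. push f x u = d2 f x v w - sff f x v w)"

definition infinitesimal_bending :: "'a::euclidean_space set \<Rightarrow> ('a \<Rightarrow> 'b::euclidean_space) \<Rightarrow> ('a \<Rightarrow> 'b) \<Rightarrow> bool" where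
  "infinitesimal_bending U f \<tau> \<longleftrightarrow> smooth_on U \<tau> \<and> (\<forall>x\<in>U. \<forall>v. push f x v \<bullet> push \<tau> x v = 0)"

definition Bform :: "('a::euclidean_space \<Rightarrow> 'b::euclidean_space) \<Rightarrow> ('a \<Rightarrow> 'b) \<Rightarrow> 'a \<Rightarrow> 'a \<Rightarrow> 'a \<Rightarrow> 'b" where
  "Bform f \<tau> x v w = d2 \<tau> x v w - push \<tau> x (conn f x v w)"

definition beta :: "('a::euclidean_space \<Rightarrow> 'b::euclidean_space) \<Rightarrow> ('a \<Rightarrow> 'b) \<Rightarrow> 'a \<Rightarrow> 'a \<Rightarrow> 'a \<Rightarrow> 'b" where
  "beta f \<tau> x v w = nproj f x (Bform f \<tau> x v w)"

definition flat :: "('w \<Rightarrow> 'w \<Rightarrow> real) \<Rightarrow> ('v \<Rightarrow> 'u \<Rightarrow> 'w) \<Rightarrow> bool" where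
  "flat ip B \<longleftrightarrow> (\<forall>X Y Z W. ip (B X Z) (B Y W) - ip (B X W) (B Y Z) = 0)"

definition split_ip :: "'b::real_inner \<times> 'b \<Rightarrow> 'b \<times> 'b \<Rightarrow> real" where
  "split_ip p q = fst p \<bullet> fst q - snd p \<bullet> snd q"

definition theta :: "('a::euclidean_space \<Rightarrow> 'b::euclidean_space) \<Rightarrow> ('a \<Rightarrow> 'b) \<Rightarrow> 'a \<Rightarrow> 'a \<Rightarrow> 'a \<Rightarrow> 'b \<times> 'b" where
  "theta f \<tau> x v w = (sff f x v w + beta f \<tau> x v w, sff f x v w - beta f \<tau> x v w)"

end

theory Submission
  imports Defs
begin

text \<open>Polarizing the bending condition gives
  \<open>\<langle>f\<^sub>* u, \<tau>\<^sub>* v\<rangle> + \<langle>\<tau>\<^sub>* u, f\<^sub>* v\<rangle> = 0\<close> on all of \<open>U\<close>. Differentiating it once and using the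
  symmetry of second derivatives yields \<open>\<langle>f\<^sub>* u, D\<^sup>2\<tau>(v,w)\<rangle> + \<langle>\<tau>\<^sub>* u, D\<^sup>2f(v,w)\<rangle> = 0\<close>;
  differentiating this again (and using symmetry of third derivatives) shows that
  \<open>\<langle>D\<^sup>2f(X,Z), D\<^sup>2\<tau>(Y,W)\<rangle> + \<langle>D\<^sup>2\<tau>(X,Z), D\<^sup>2f(Y,W)\<rangle>\<close> is symmetric in \<open>Z, W\<close>.
  Splitting \<open>D\<^sup>2f\<close> and \<open>D\<^sup>2\<tau>\<close> into tangent and normal parts (Gauss formula,
  \<open>B = D\<^sup>2\<tau> - \<tau>\<^sub>* \<nabla>\<close>), the first-order identities kill all tangential terms and this
  pairing equals \<open>\<langle>\<alpha>(X,Z), \<beta>(Y,W)\<rangle> + \<langle>\<beta>(X,Z), \<alpha>(Y,W)\<rangle>\<close>, which is half of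
  \<open>\<langle>\<langle>\<theta>(X,Z), \<theta>(Y,W)\<rangle>\<rangle>\<close>.\<close>

section \<open>Symmetry of iterated derivatives\<close>

lemma second_difference_mvt:
  fixes G D1 D12 :: "'a::real_normed_vector \<Rightarrow> real"
  assumes h: "h > 0"
    and sub: "cball x (h * (norm v + norm w)) \<subseteq> U"
    and d1: "\<And>y s. y + s *\<^sub>R v \<in> U \<Longrightarrow>
      ((\<lambda>s. G (y + s *\<^sub>R v)) has_real_derivative D1 (y + s *\<^sub>R v)) (at s)"
    and d12: "\<And>y t. y + t *\<^sub>R w \<in> U \<Longrightarrow>
      ((\<lambda>t. D1 (y + t *\<^sub>R w)) has_real_derivative D12 (y + t *\<^sub>R w)) (at t)"
  shows "\<exists>p. norm (p - x) \<le> h * (norm v + norm w) \<and>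
     G (x + h *\<^sub>R v + h *\<^sub>R w) - G (x + h *\<^sub>R v) - G (x + h *\<^sub>R w) + G x = h * h * D12 p"
proof -
  have near: "norm ((x + s *\<^sub>R v + t *\<^sub>R w) - x) \<le> h * (norm v + norm w)"
    if "0 \<le> s" "s \<le> h" "0 \<le> t" "t \<le> h" for s t
  proof -
    have "norm (s *\<^sub>R v + t *\<^sub>R w) \<le> s * norm v + t * norm w"
      using norm_triangle_ineq[of "s *\<^sub>R v" "t *\<^sub>R w"] that by simp
    also have "\<dots> \<le> h * (norm v + norm w)"
      using that by (simp add: distrib_left add_mono mult_right_mono)
    finally show ?thesis by (simp add: algebra_simps)
  qed
  have inU: "x + s *\<^sub>R v + t *\<^sub>R w \<in> U" if "0 \<le> s" "s \<le> h" "0 \<le> t" "t \<le> h" for s t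
  proof -
    have "dist x (x + s *\<^sub>R v + t *\<^sub>R w) = norm ((x + s *\<^sub>R v + t *\<^sub>R w) - x)"
      by (metis dist_norm norm_minus_commute)
    then show ?thesis
      using near[OF that] sub by auto
  qed
  define phi where "phi s = G (x + h *\<^sub>R w + s *\<^sub>R v) - G (x + s *\<^sub>R v)" for s
  have "\<exists>z. 0 < z \<and> z < h \<and>
      phi h - phi 0 = (h - 0) * (D1 (x + h *\<^sub>R w + z *\<^sub>R v) - D1 (x + z *\<^sub>R v))"
  proof (rule MVT2[OF h])
    fix s assume s: "0 \<le> s" "s \<le> h"
    have "x + h *\<^sub>R w + s *\<^sub>R v \<in> U" "x + s *\<^sub>R v \<in> U"
      using inU[OF s, of h] inU[OF s, of 0] h by (simp_all add: algebra_simps)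
    then show "(phi has_real_derivative (D1 (x + h *\<^sub>R w + s *\<^sub>R v) - D1 (x + s *\<^sub>R v))) (at s)"
      unfolding phi_def by (intro DERIV_diff d1)
  qed
  then obtain z where z: "0 < z" "z < h"
    "phi h - phi 0 = h * (D1 (x + h *\<^sub>R w + z *\<^sub>R v) - D1 (x + z *\<^sub>R v))"
    by auto
  have "\<exists>t. 0 < t \<and> t < h \<and> D1 (x + z *\<^sub>R v + h *\<^sub>R w) - D1 (x + z *\<^sub>R v + 0 *\<^sub>R w)
      = (h - 0) * D12 (x + z *\<^sub>R v + t *\<^sub>R w)"
    using z inU by (intro MVT2[OF h]) (simp add: d12)
  then obtain t where t: "0 < t" "t < h"
    "D1 (x + z *\<^sub>R v + h *\<^sub>R w) - D1 (x + z *\<^sub>R v) = h * D12 (x + z *\<^sub>R v + t *\<^sub>R w)"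
    by auto
  have "G (x + h *\<^sub>R v + h *\<^sub>R w) - G (x + h *\<^sub>R v) - G (x + h *\<^sub>R w) + G x = phi h - phi 0"
    by (simp add: phi_def algebra_simps)
  also have "\<dots> = h * h * D12 (x + z *\<^sub>R v + t *\<^sub>R w)"
    using z(3) t(3) by (simp add: algebra_simps)
  finally show ?thesis
    using near[of z t] z t by (intro exI[of _ "x + z *\<^sub>R v + t *\<^sub>R w"]) simp
qed

lemma second_difference_tendsto:
  fixes G D1 D12 :: "'a::real_normed_vector \<Rightarrow> real"
  assumes U: "open U" "x \<in> U"
    and d1: "\<And>y s. y + s *\<^sub>R v \<in> U \<Longrightarrow>
      ((\<lambda>s. G (y + s *\<^sub>R v)) has_real_derivative D1 (y + s *\<^sub>R v)) (at s)"
    and d12: "\<And>y t. y + t *\<^sub>R w \<in> U \<Longrightarrow>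
      ((\<lambda>t. D1 (y + t *\<^sub>R w)) has_real_derivative D12 (y + t *\<^sub>R w)) (at t)"
    and cont: "continuous (at x) D12"
  shows "((\<lambda>h. (G (x + h *\<^sub>R v + h *\<^sub>R w) - G (x + h *\<^sub>R v) - G (x + h *\<^sub>R w) + G x) / h\<^sup>2)
    \<longlongrightarrow> D12 x) (at_right 0)"
proof (rule tendstoI)
  fix e :: real assume "e > 0"
  then obtain d where d: "d > 0" "\<And>y. dist y x < d \<Longrightarrow> dist (D12 y) (D12 x) < e"
    using cont unfolding continuous_at_eps_delta by blast
  obtain r where r: "r > 0" "cball x r \<subseteq> U"
    using U open_contains_cball by blast
  define b where "b = min r d / (norm v + norm w + 1)"
  have M: "norm v + norm w + 1 > 0"
    by (simp add: add_nonneg_pos)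
  have b: "b > 0"
    using r d M by (simp add: b_def)
  have small: "h * (norm v + norm w) < min r d" if "0 < h" "h < b" for h
  proof -
    have "h * (norm v + norm w) \<le> h * (norm v + norm w + 1)"
      using that by simp
    also have "\<dots> < b * (norm v + norm w + 1)"
      using that M by (intro mult_strict_right_mono)
    also have "\<dots> = min r d"
      using M by (simp add: b_def)
    finally show ?thesis .
  qed
  show "\<forall>\<^sub>F h in at_right 0.
    dist ((G (x + h *\<^sub>R v + h *\<^sub>R w) - G (x + h *\<^sub>R v) - G (x + h *\<^sub>R w) + G x) / h\<^sup>2) (D12 x) < e"
    unfolding eventually_at_right_field
  proof (intro exI[of _ b] conjI allI impI)
    fix h :: real assume h: "0 < h" "h < b"
    have "cball x (h * (norm v + norm w)) \<subseteq> U"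
      using small[OF h] r(2) by (meson less_imp_le min.boundedE subset_cball order_trans)
    then obtain p where p: "norm (p - x) \<le> h * (norm v + norm w)"
      "G (x + h *\<^sub>R v + h *\<^sub>R w) - G (x + h *\<^sub>R v) - G (x + h *\<^sub>R w) + G x = h * h * D12 p"
      using second_difference_mvt[OF h(1) _ d1 d12] by blast
    have "dist p x < d"
      using p(1) small[OF h] by (simp add: dist_norm)
    then show "dist ((G (x + h *\<^sub>R v + h *\<^sub>R w) - G (x + h *\<^sub>R v) - G (x + h *\<^sub>R w) + G x) / h\<^sup>2) (D12 x) < e"
      using d(2) p(2) h(1) by (simp add: power2_eq_square)
  qed (use b in simp)
qed

lemma mixed_line_derivatives_eq:
  fixes G Dv Dw Dvw Dwv :: "'a::real_normed_vector \<Rightarrow> real"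
  assumes U: "open U" "x \<in> U"
    and dv: "\<And>y s. y + s *\<^sub>R v \<in> U \<Longrightarrow>
      ((\<lambda>s. G (y + s *\<^sub>R v)) has_real_derivative Dv (y + s *\<^sub>R v)) (at s)"
    and dvw: "\<And>y t. y + t *\<^sub>R w \<in> U \<Longrightarrow>
      ((\<lambda>t. Dv (y + t *\<^sub>R w)) has_real_derivative Dvw (y + t *\<^sub>R w)) (at t)"
    and dw: "\<And>y s. y + s *\<^sub>R w \<in> U \<Longrightarrow>
      ((\<lambda>s. G (y + s *\<^sub>R w)) has_real_derivative Dw (y + s *\<^sub>R w)) (at s)"
    and dwv: "\<And>y t. y + t *\<^sub>R v \<in> U \<Longrightarrow>
      ((\<lambda>t. Dw (y + t *\<^sub>R v)) has_real_derivative Dwv (y + t *\<^sub>R v)) (at t)"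
    and "continuous (at x) Dvw" "continuous (at x) Dwv"
  shows "Dvw x = Dwv x"
proof -
  let ?\<Delta> = "\<lambda>h. (G (x + h *\<^sub>R v + h *\<^sub>R w) - G (x + h *\<^sub>R v) - G (x + h *\<^sub>R w) + G x) / h\<^sup>2"
  have "(?\<Delta> \<longlongrightarrow> Dvw x) (at_right 0)"
    by (rule second_difference_tendsto[OF U dv dvw \<open>continuous (at x) Dvw\<close>])
  moreover have "(?\<Delta> \<longlongrightarrow> Dwv x) (at_right 0)"
    using second_difference_tendsto[OF U dw dwv \<open>continuous (at x) Dwv\<close>]
    by (simp add: algebra_simps)
  ultimately show ?thesis
    using tendsto_unique[OF trivial_limit_at_right_real] by blast
qed

lemma has_real_derivative_inner_along_line:
  fixes g :: "'a::real_normed_vector \<Rightarrow> 'b::real_inner"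
  assumes "g differentiable (at (y + s *\<^sub>R u))"
  shows "((\<lambda>s. g (y + s *\<^sub>R u) \<bullet> e) has_real_derivative
    (frechet_derivative g (at (y + s *\<^sub>R u)) u \<bullet> e)) (at s)"
proof -
  let ?g' = "frechet_derivative g (at (y + s *\<^sub>R u))"
  have g: "(g has_derivative ?g') (at (y + s *\<^sub>R u))"
    using assms frechet_derivative_works by blast
  have "((\<lambda>s. y + s *\<^sub>R u) has_derivative (\<lambda>t. t *\<^sub>R u)) (at s)"
    by (auto intro!: derivative_eq_intros)
  from diff_chain_at[OF this g]
  have "((\<lambda>s. g (y + s *\<^sub>R u) \<bullet> e) has_derivative (\<lambda>t. ?g' (t *\<^sub>R u) \<bullet> e)) (at s)"
    by (intro bounded_linear.has_derivative[OF bounded_linear_inner_left]) (simp add: o_def)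
  moreover have "(\<lambda>t. ?g' (t *\<^sub>R u) \<bullet> e) = (*) (?g' u \<bullet> e)"
    using has_derivative_linear[OF g] by (auto simp: linear_scale)
  ultimately show ?thesis
    by (simp add: has_field_derivative_def)
qed

lemma dder_append: "dder vs (dder ws g) = dder (vs @ ws) g"
  by (induction vs) auto

lemma smooth_on_dder: "smooth_on U g \<Longrightarrow> smooth_on U (dder ws g)"
  unfolding smooth_on_def by (simp add: dder_append)

lemma smooth_on_differentiable_dder:
  "smooth_on U g \<Longrightarrow> y \<in> U \<Longrightarrow> dder vs g differentiable (at y)"
  unfolding smooth_on_def using differentiable_on_eq_differentiable_at by blast

lemma smooth_on_has_derivative_dder:
  "smooth_on U g \<Longrightarrow> y \<in> U \<Longrightarrow>
    (dder vs g has_derivative frechet_derivative (dder vs g) (at y)) (at y)"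
  using smooth_on_differentiable_dder frechet_derivative_works by blast

lemma push_eq_dder: "push g y u = dder [u] g y"
  by (simp add: push_def)

lemma d2_eq_dder: "d2 g y a b = dder [a, b] g y"
  by (simp add: d2_def)

lemma smooth_on_linear_push: "smooth_on U g \<Longrightarrow> y \<in> U \<Longrightarrow> linear (push g y)"
  using linear_frechet_derivative[OF smooth_on_differentiable_dder[of U g y "[]"]]
  by (simp add: push_def[abs_def])

lemma dder_commute:
  fixes g :: "'a::real_normed_vector \<Rightarrow> 'b::real_inner"
  assumes sm: "smooth_on U g" and y: "y \<in> U"
  shows "dder [v, w] g y = dder [w, v] g y"
proof -
  have U: "open U"
    using sm smooth_on_def by blast
  have line: "((\<lambda>s. dder vs g (p + s *\<^sub>R u) \<bullet> e) has_real_derivative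
      dder (u # vs) g (p + s *\<^sub>R u) \<bullet> e) (at s)" if "p + s *\<^sub>R u \<in> U" for vs u p s e
    using has_real_derivative_inner_along_line[OF smooth_on_differentiable_dder[OF sm that]] by simp
  have line0: "((\<lambda>s. g (p + s *\<^sub>R u) \<bullet> e) has_real_derivative
      dder [u] g (p + s *\<^sub>R u) \<bullet> e) (at s)" if "p + s *\<^sub>R u \<in> U" for u p s e
    using line[where vs = "[]", OF that] by simp
  have cont: "continuous (at y) (\<lambda>y. dder vs g y \<bullet> e)" for vs e
    using differentiable_imp_continuous_within[OF smooth_on_differentiable_dder[OF sm y]]
    by (intro continuous_intros)
  have "dder [w, v] g y \<bullet> e = dder [v, w] g y \<bullet> e" for e
    by (rule mixed_line_derivatives_eq[OF U y, where G = "\<lambda>y. g y \<bullet> e"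
        and Dv = "\<lambda>y. dder [v] g y \<bullet> e" and Dw = "\<lambda>y. dder [w] g y \<bullet> e"
        and Dvw = "\<lambda>y. dder [w, v] g y \<bullet> e" and Dwv = "\<lambda>y. dder [v, w] g y \<bullet> e",
        OF line0 line line0 line cont cont])
  from this[of "dder [v, w] g y - dder [w, v] g y"]
  have "(dder [v, w] g y - dder [w, v] g y) \<bullet> (dder [v, w] g y - dder [w, v] g y) = 0"
    by (simp add: inner_diff_left)
  then show ?thesis
    by simp
qed

lemma dder_Cons_cong_open:
  assumes "smooth_on U g" "y \<in> U" "\<And>z. z \<in> U \<Longrightarrow> dder p g z = dder q g z"
  shows "dder (k # p) g y = dder (k # q) g y"
proof -
  have "frechet_derivative (dder p g) (at y) = frechet_derivative (dder q g) (at y)"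
    by (rule frechet_derivative_transform_within_open[OF smooth_on_differentiable_dder[OF assms(1,2)]])
      (use assms in \<open>auto simp: smooth_on_def\<close>)
  then show ?thesis
    by simp
qed

lemma dder_commute_outer:
  fixes g :: "'a::real_normed_vector \<Rightarrow> 'b::real_inner"
  assumes sm: "smooth_on U g" and y: "y \<in> U"
  shows "dder [k, j, l] g y = dder [l, j, k] g y"
proof -
  have "dder [k, j, l] g y = dder [k, l] (dder [j] g) y"
    using dder_Cons_cong_open[OF sm y, of "[j, l]" "[l, j]"] dder_commute[OF sm]
    by (simp add: dder_append)
  also have "\<dots> = dder [l, k] (dder [j] g) y"
    by (rule dder_commute[OF smooth_on_dder[OF sm] y])
  also have "\<dots> = dder [l, j, k] g y"
    using dder_Cons_cong_open[OF sm y, of "[k, j]" "[j, k]"] dder_commute[OF sm]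
    by (simp add: dder_append)
  finally show ?thesis .
qed

section \<open>Differentiating the bending condition\<close>

definition dder_pairing ::
    "('a::real_normed_vector \<Rightarrow> 'b::real_inner) \<Rightarrow> ('a \<Rightarrow> 'b) \<Rightarrow> 'a list \<Rightarrow> 'a list \<Rightarrow> 'a \<Rightarrow> real" where
  "dder_pairing f \<tau> p q y = dder p f y \<bullet> dder q \<tau> y + dder p \<tau> y \<bullet> dder q f y"

lemma dder_pairing_commute: "dder_pairing f \<tau> p q y = dder_pairing f \<tau> q p y"
  by (simp add: dder_pairing_def inner_commute)

lemma dder_pairing_Cons_vanishing:
  assumes sf: "smooth_on U f" and st: "smooth_on U \<tau>" and y: "y \<in> U"
    and vanish: "\<And>z. z \<in> U \<Longrightarrow> dder_pairing f \<tau> p q z = 0"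
  shows "dder_pairing f \<tau> (k # p) q y + dder_pairing f \<tau> p (k # q) y = 0"
proof -
  let ?D = "\<lambda>g vs. frechet_derivative (dder vs g) (at y)"
  have "((\<lambda>z. dder_pairing f \<tau> p q z) has_derivative
     (\<lambda>h. (dder p f y \<bullet> ?D \<tau> q h + ?D f p h \<bullet> dder q \<tau> y)
       + (dder p \<tau> y \<bullet> ?D f q h + ?D \<tau> p h \<bullet> dder q f y))) (at y)"
    unfolding dder_pairing_def
    by (intro has_derivative_add has_derivative_inner
        smooth_on_has_derivative_dder[OF sf y] smooth_on_has_derivative_dder[OF st y])
  moreover have "((\<lambda>z. dder_pairing f \<tau> p q z) has_derivative (\<lambda>_. 0)) (at y)"
    by (rule has_derivative_transform_within_open[where f = "\<lambda>_. 0" and s = U])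
      (use sf y vanish in \<open>auto simp: smooth_on_def\<close>)
  ultimately have "(\<lambda>h. (dder p f y \<bullet> ?D \<tau> q h + ?D f p h \<bullet> dder q \<tau> y)
       + (dder p \<tau> y \<bullet> ?D f q h + ?D \<tau> p h \<bullet> dder q f y)) = (\<lambda>_. 0)"
    by (rule has_derivative_unique)
  from fun_cong[OF this, of k] show ?thesis
    by (simp add: dder_pairing_def algebra_simps)
qed

lemma sym_antisym_eq_0:
  fixes K :: "'a \<Rightarrow> 'a \<Rightarrow> 'a \<Rightarrow> real"
  assumes sym: "\<And>a b c. K a b c = K a c b"
    and antisym: "\<And>a b c. K a b c = - K c b a"
  shows "K a b c = 0"
proof -
  have "K a b c = - K c b a" by (rule antisym)
  also have "\<dots> = - K c a b" by (simp add: sym)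
  also have "\<dots> = K b a c" by (simp add: antisym[of b a c])
  also have "\<dots> = K b c a" by (rule sym)
  also have "\<dots> = - K a c b" by (rule antisym)
  also have "\<dots> = - K a b c" by (simp add: sym)
  finally show ?thesis
    by simp
qed

lemma dder_pairing_first_order:
  assumes sf: "smooth_on U f" and st: "smooth_on U \<tau>" and y: "y \<in> U"
    and polar: "\<And>z u v. z \<in> U \<Longrightarrow> dder_pairing f \<tau> [u] [v] z = 0"
  shows "dder_pairing f \<tau> [u] [v, w] y = 0"
proof (rule sym_antisym_eq_0[where K = "\<lambda>a b c. dder_pairing f \<tau> [a] [b, c] y"])
  show "dder_pairing f \<tau> [a] [b, c] y = dder_pairing f \<tau> [a] [c, b] y" for a b c
    unfolding dder_pairing_def dder_commute[OF sf y, of b c] dder_commute[OF st y, of b c] ..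
  show "dder_pairing f \<tau> [a] [b, c] y = - dder_pairing f \<tau> [c] [b, a] y" for a b c
    using dder_pairing_Cons_vanishing[where p = "[c]" and q = "[a]" and k = b, OF sf st y polar]
      dder_pairing_commute[of f \<tau> "[b, c]" "[a]" y] by linarith
qed

lemma dder_pairing_second_order:
  assumes sf: "smooth_on U f" and st: "smooth_on U \<tau>" and y: "y \<in> U"
    and polar: "\<And>z u v. z \<in> U \<Longrightarrow> dder_pairing f \<tau> [u] [v] z = 0"
  shows "dder_pairing f \<tau> [i, k] [j, l] y = dder_pairing f \<tau> [i, l] [j, k] y"
proof -
  have first: "\<And>z. z \<in> U \<Longrightarrow> dder_pairing f \<tau> [i] [j, m] z = 0" for m
    by (rule dder_pairing_first_order[OF sf st _ polar])
  have "dder_pairing f \<tau> [k, i] [j, l] y + dder_pairing f \<tau> [i] [k, j, l] y = 0"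
    by (rule dder_pairing_Cons_vanishing[OF sf st y first])
  moreover have "dder_pairing f \<tau> [l, i] [j, k] y + dder_pairing f \<tau> [i] [l, j, k] y = 0"
    by (rule dder_pairing_Cons_vanishing[OF sf st y first])
  moreover have "dder_pairing f \<tau> [i] [k, j, l] y = dder_pairing f \<tau> [i] [l, j, k] y"
    unfolding dder_pairing_def dder_commute_outer[OF sf y, of k j l]
      dder_commute_outer[OF st y, of k j l] ..
  moreover have swap: "dder_pairing f \<tau> [m, i] q y = dder_pairing f \<tau> [i, m] q y" for m q
    unfolding dder_pairing_def dder_commute[OF sf y, of m i] dder_commute[OF st y, of m i] ..
  ultimately show ?thesis
    using swap[of k "[j, l]"] swap[of l "[j, k]"] by linarith
qed

lemma infinitesimal_bending_polarized:
  assumes bending: "infinitesimal_bending U f \<tau>" and sf: "smooth_on U f" and y: "y \<in> U"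
  shows "dder_pairing f \<tau> [u] [v] y = 0"
proof -
  have st: "smooth_on U \<tau>" and bend: "\<And>w. push f y w \<bullet> push \<tau> y w = 0"
    using bending y unfolding infinitesimal_bending_def by auto
  have "0 = push f y (u + v) \<bullet> push \<tau> y (u + v)"
    by (rule bend[symmetric])
  also have "\<dots> = push f y u \<bullet> push \<tau> y u + push f y v \<bullet> push \<tau> y v
      + (push f y u \<bullet> push \<tau> y v + push \<tau> y u \<bullet> push f y v)"
    using linear_add[OF smooth_on_linear_push[OF sf y]] linear_add[OF smooth_on_linear_push[OF st y]]
    by (simp add: inner_add_left inner_add_right inner_commute)
  finally show ?thesis
    using bend by (simp add: dder_pairing_def push_eq_dder)
qed

section \<open>Tangent and normal parts at a point\<close>

lemma orthogonal_component_ex1: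
  fixes S :: "'a::euclidean_space set"
  assumes S: "subspace S"
  shows "\<exists>!n. (\<forall>t\<in>S. n \<bullet> t = 0) \<and> u - n \<in> S"
proof -
  have span: "span S = S"
    using S span_eq_iff by blast
  obtain a n where "a \<in> span S" "\<And>w. w \<in> span S \<Longrightarrow> orthogonal n w" "u = a + n"
    using orthogonal_subspace_decomp_exists by metis
  then have n: "(\<forall>t\<in>S. n \<bullet> t = 0) \<and> u - n \<in> S"
    by (auto simp: span orthogonal_def)
  have "m = n" if m: "(\<forall>t\<in>S. m \<bullet> t = 0) \<and> u - m \<in> S" for m
  proof -
    have "m - n \<in> S"
      using subspace_diff[OF S, of "u - n" "u - m"] n m by (simp add: algebra_simps)
    then have "(m - n) \<bullet> (m - n) = 0"
      using n m by (simp add: inner_diff_left)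
    then show ?thesis
      by simp
  qed
  with n show ?thesis
    by blast
qed

lemma nproj_normal_component:
  assumes "linear (push f x)"
  shows "nproj f x u \<bullet> push f x t = 0" and "u - nproj f x u \<in> range (push f x)"
proof -
  have "subspace (range (push f x))"
    using linear_subspace_image[OF assms subspace_UNIV] by simp
  from theI'[OF orthogonal_component_ex1[OF this, of u]]
  show "nproj f x u \<bullet> push f x t = 0" and "u - nproj f x u \<in> range (push f x)"
    unfolding nproj_def by auto
qed

lemma push_conn:
  assumes lin: "linear (push f x)" and inj: "inj (push f x)"
  shows "push f x (conn f x v w) = d2 f x v w - sff f x v w"
proof -
  have "\<exists>!t. push f x t = d2 f x v w - sff f x v w"
    using nproj_normal_component(2)[OF lin, of "d2 f x v w"] inj by (auto simp: sff_def inj_def)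
  from theI'[OF this] show ?thesis
    unfolding conn_def .
qed

lemma d2_pairing_eq_sff_beta_pairing:
  fixes f \<tau> :: "'a::euclidean_space \<Rightarrow> 'b::euclidean_space"
  assumes lin: "linear (push f x)" and inj: "inj (push f x)"
    and first: "\<And>u v. push f x u \<bullet> push \<tau> x v + push \<tau> x u \<bullet> push f x v = 0"
    and second: "\<And>u v w. push f x u \<bullet> d2 \<tau> x v w + push \<tau> x u \<bullet> d2 f x v w = 0"
  shows "d2 f x a b \<bullet> d2 \<tau> x c d + d2 \<tau> x a b \<bullet> d2 f x c d
    = sff f x a b \<bullet> beta f \<tau> x c d + beta f \<tau> x a b \<bullet> sff f x c d"
proof -
  let ?con = "conn f x" and ?\<alpha> = "sff f x" and ?B = "Bform f \<tau> x"
  have gauss_f: "d2 f x a b = push f x (?con a b) + ?\<alpha> a b" for a b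
    using push_conn[OF lin inj] by simp
  have gauss_\<tau>: "d2 \<tau> x a b = push \<tau> x (?con a b) + ?B a b" for a b
    by (simp add: Bform_def)
  have tangential: "push f x u \<bullet> ?B a b + push \<tau> x u \<bullet> ?\<alpha> a b = 0" for u a b
  proof -
    have "push f x u \<bullet> ?B a b + push \<tau> x u \<bullet> ?\<alpha> a b
        = (push f x u \<bullet> d2 \<tau> x a b + push \<tau> x u \<bullet> d2 f x a b)
        - (push f x u \<bullet> push \<tau> x (?con a b) + push \<tau> x u \<bullet> push f x (?con a b))"
      using push_conn[OF lin inj, of a b] by (simp add: Bform_def inner_diff_right)
    then show ?thesis
      using first second by simp
  qed
  have normal: "?\<alpha> a b \<bullet> ?B c d = ?\<alpha> a b \<bullet> beta f \<tau> x c d" for a b c d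
  proof -
    obtain t where "?B c d - beta f \<tau> x c d = push f x t"
      using nproj_normal_component(2)[OF lin] unfolding beta_def by blast
    moreover have "?\<alpha> a b \<bullet> push f x t = 0"
      using nproj_normal_component(1)[OF lin] by (simp add: sff_def)
    ultimately show ?thesis
      by (metis inner_diff_right right_minus_eq)
  qed
  have "d2 f x a b \<bullet> d2 \<tau> x c d + d2 \<tau> x a b \<bullet> d2 f x c d
      = (push f x (?con a b) \<bullet> push \<tau> x (?con c d) + push \<tau> x (?con a b) \<bullet> push f x (?con c d))
      + (push f x (?con a b) \<bullet> ?B c d + push \<tau> x (?con a b) \<bullet> ?\<alpha> c d)
      + (push f x (?con c d) \<bullet> ?B a b + push \<tau> x (?con c d) \<bullet> ?\<alpha> a b)
      + ?\<alpha> a b \<bullet> ?B c d + ?\<alpha> c d \<bullet> ?B a b"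
    unfolding gauss_f[of a b] gauss_f[of c d] gauss_\<tau>[of a b] gauss_\<tau>[of c d]
    by (simp add: inner_add_left inner_add_right inner_commute algebra_simps)
  also have "\<dots> = ?\<alpha> a b \<bullet> beta f \<tau> x c d + beta f \<tau> x a b \<bullet> ?\<alpha> c d"
    using first[of "?con a b" "?con c d"] tangential[of "?con a b" c d] tangential[of "?con c d" a b]
      normal[of a b c d] normal[of c d a b] inner_commute[of "?\<alpha> c d" "beta f \<tau> x a b"]
    by linarith
  finally show ?thesis .
qed

lemma split_ip_theta:
  "split_ip (theta f \<tau> x a b) (theta f \<tau> x c d)
    = 2 * (sff f x a b \<bullet> beta f \<tau> x c d + beta f \<tau> x a b \<bullet> sff f x c d)"
  unfolding theta_def split_ip_def
  by (simp add: inner_add_left inner_add_right inner_diff_left inner_diff_right inner_commute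
      algebra_simps)

theorem lemma13:
  fixes U :: "'a::euclidean_space set" and f \<tau> :: "'a \<Rightarrow> 'b::euclidean_space"
  assumes "immersion_on U f"
    and "infinitesimal_bending U f \<tau>"
    and "x \<in> U"
  shows "flat split_ip (theta f \<tau> x)"
proof -
  have sf: "smooth_on U f" and inj: "inj (push f x)"
    using assms(1,3) unfolding immersion_on_def by auto
  have st: "smooth_on U \<tau>"
    using assms(2) unfolding infinitesimal_bending_def by auto
  have polar: "\<And>y u v. y \<in> U \<Longrightarrow> dder_pairing f \<tau> [u] [v] y = 0"
    by (rule infinitesimal_bending_polarized[OF assms(2) sf])
  have pairing: "d2 f x a b \<bullet> d2 \<tau> x c d + d2 \<tau> x a b \<bullet> d2 f x c d
      = sff f x a b \<bullet> beta f \<tau> x c d + beta f \<tau> x a b \<bullet> sff f x c d" for a b c d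
  proof (rule d2_pairing_eq_sff_beta_pairing[OF smooth_on_linear_push[OF sf assms(3)] inj])
    show "push f x u \<bullet> push \<tau> x v + push \<tau> x u \<bullet> push f x v = 0" for u v
      using polar[OF assms(3), of u v] by (simp add: dder_pairing_def push_eq_dder)
    show "push f x u \<bullet> d2 \<tau> x v w + push \<tau> x u \<bullet> d2 f x v w = 0" for u v w
      using dder_pairing_first_order[OF sf st assms(3) polar, of u v w]
      by (simp add: dder_pairing_def push_eq_dder d2_eq_dder)
  qed
  show ?thesis
    unfolding flat_def
  proof (intro allI)
    fix X Y Z W
    show "split_ip (theta f \<tau> x X Z) (theta f \<tau> x Y W) - split_ip (theta f \<tau> x X W) (theta f \<tau> x Y Z) = 0"
      using dder_pairing_second_order[OF sf st assms(3) polar, of X Z Y W]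
      by (simp add: split_ip_theta pairing[symmetric] dder_pairing_def d2_eq_dder)
  qed
qed

end
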